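(* For every pair $s,t\in\{0,1\}^{<\mathbb N}$ that are independent (neither is a prefix of the other), the element $y_sy_t^{-1}$ lies in $S$.
   Context: Let $\{0,1\}^{\mathbb N}$ be the Cantor set of infinite binary sequences and $\{0,1\}^{<\mathbb N}$ the set of finite binary words, including the empty word; juxtaposition denotes concatenation, $0^n,1^n$ denote constant words. Homeomorphisms act on the right. Define $x,y$ by $00\eta\cdot x=0\eta$, $01\eta\cdot x=10\eta$, $1\eta\cdot x=11\eta$, and recursively $00\eta\cdot y=0(\eta\cdot y)$, $01\eta\cdot y=10(\eta\cdot y^{-1})$, $1\eta\cdot y=11(\eta\cdot y)$; $x_s$ (resp. $y_s$) sends $s\eta\mapsto s(\eta\cdot x)$ (resp. $s(\eta\cdot y)$) and fixes sequences not beginning with $s$. For $n\ge0$, $p_n$ is the homeomorphism with $1^k0\eta\cdot p_n=1^{k+1}0\eta$ for $0\le k\le n-1$, $1^n0\eta\cdot p_n=1^{n+1}\eta$, and $1^{n+1}\eta\cdot p_n=0\eta$. $T$ is the group generated by all $x_s$ and all $p_n$, and $S=\langle T,\ y_{10}y_{110}^{-1}\rangle$. *)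

theory Defs
  imports Main "HOL-Library.Sublist"
begin

text \<open>Points of the Cantor set are infinite binary sequences \<open>nat \<Rightarrow> bool\<close>
  (False = 0, True = 1); finite words are \<open>bool list\<close>.  Homeomorphisms act on the
  right: \<open>\<eta> \<cdot> g\<close> is rendered as the function application \<open>g \<eta>\<close>, so the
  group product \<open>g h\<close> (first g, then h) is the function \<open>h \<circ> g\<close>.\<close>

type_synonym cantor = "nat \<Rightarrow> bool"

definition pre :: "bool list \<Rightarrow> cantor \<Rightarrow> cantor" where
  "pre s \<eta> = (\<lambda>i. if i < length s then s ! i else \<eta> (i - length s))"

definition sdrop :: "nat \<Rightarrow> cantor \<Rightarrow> cantor" where
  "sdrop n \<xi> = (\<lambda>i. \<xi> (i + n))"

definition begins :: "bool list \<Rightarrow> cantor \<Rightarrow> bool" where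
  "begins s \<xi> \<longleftrightarrow> (\<forall>i < length s. \<xi> i = s ! i)"

definition xmap :: "cantor \<Rightarrow> cantor" where
  "xmap \<xi> = (if \<not> \<xi> 0 \<and> \<not> \<xi> 1 then pre [False] (sdrop 2 \<xi>)
             else if \<not> \<xi> 0 then pre [True, False] (sdrop 2 \<xi>)
             else pre [True, True] (sdrop 1 \<xi>))"

text \<open>The map y and its inverse, given bitwise by the recursive equations
  00\<eta>.y = 0(\<eta>.y), 01\<eta>.y = 10(\<eta>.y\<inverse>), 1\<eta>.y = 11(\<eta>.y) and the derived equations
  for the inverse 0\<eta>.y\<inverse> = 00(\<eta>.y\<inverse>), 10\<eta>.y\<inverse> = 01(\<eta>.y), 11\<eta>.y\<inverse> = 1(\<eta>.y\<inverse>).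
  \<open>ymap False k \<xi>\<close> is bit k of \<xi>.y, \<open>ymap True k \<xi>\<close> is bit k of \<xi>.y\<inverse>.\<close>
fun ymap :: "bool \<Rightarrow> nat \<Rightarrow> cantor \<Rightarrow> bool" where
  "ymap b k f = (if \<not> b then
      (if \<not> f 0 \<and> \<not> f 1 then (case k of 0 \<Rightarrow> False | Suc j \<Rightarrow> ymap False j (sdrop 2 f))
       else if \<not> f 0 then (case k of 0 \<Rightarrow> True | Suc 0 \<Rightarrow> False | Suc (Suc j) \<Rightarrow> ymap True j (sdrop 2 f))
       else (case k of 0 \<Rightarrow> True | Suc 0 \<Rightarrow> True | Suc (Suc j) \<Rightarrow> ymap False j (sdrop 1 f)))
    else
      (if \<not> f 0 then (case k of 0 \<Rightarrow> False | Suc 0 \<Rightarrow> False | Suc (Suc j) \<Rightarrow> ymap True j (sdrop 1 f))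
       else if \<not> f 1 then (case k of 0 \<Rightarrow> False | Suc 0 \<Rightarrow> True | Suc (Suc j) \<Rightarrow> ymap False j (sdrop 2 f))
       else (case k of 0 \<Rightarrow> True | Suc j \<Rightarrow> ymap True j (sdrop 2 f))))"

definition ymp :: "cantor \<Rightarrow> cantor" where
  "ymp \<xi> = (\<lambda>k. ymap False k \<xi>)"

definition loc :: "bool list \<Rightarrow> (cantor \<Rightarrow> cantor) \<Rightarrow> cantor \<Rightarrow> cantor" where
  "loc s g \<xi> = (if begins s \<xi> then pre s (g (sdrop (length s) \<xi>)) else \<xi>)"

definition x_at :: "bool list \<Rightarrow> cantor \<Rightarrow> cantor" where
  "x_at s = loc s xmap"

definition y_at :: "bool list \<Rightarrow> cantor \<Rightarrow> cantor" where
  "y_at s = loc s ymp"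

text \<open>p_n: 1^k0\<eta> -> 1^(k+1)0\<eta> (k<n), 1^n0\<eta> -> 1^(n+1)\<eta>, 1^(n+1)\<eta> -> 0\<eta>.\<close>
definition p_map :: "nat \<Rightarrow> cantor \<Rightarrow> cantor" where
  "p_map n \<xi> = (if \<forall>i \<le> n. \<xi> i then pre [False] (sdrop (Suc n) \<xi>)
     else (let k = (LEAST i. \<not> \<xi> i) in
       if k < n then pre (replicate (Suc k) True @ [False]) (sdrop (Suc k) \<xi>)
       else pre (replicate (Suc n) True) (sdrop (Suc n) \<xi>)))"

inductive_set gen_group :: "(cantor \<Rightarrow> cantor) set \<Rightarrow> (cantor \<Rightarrow> cantor) set"
  for A where
    gen_id: "id \<in> gen_group A"
  | gen_base: "g \<in> A \<Longrightarrow> g \<in> gen_group A"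
  | gen_comp: "g \<in> gen_group A \<Longrightarrow> h \<in> gen_group A \<Longrightarrow> h \<circ> g \<in> gen_group A"
  | gen_inv: "g \<in> gen_group A \<Longrightarrow> inv g \<in> gen_group A"

definition T_gens :: "(cantor \<Rightarrow> cantor) set" where
  "T_gens = range x_at \<union> range p_map"

text \<open>S = < T, y_10 y_110\<inverse> >; the product y_10 y_110\<inverse> (right action) is
  the function \<open>inv (y_at [1,1,0]) \<circ> y_at [1,0]\<close>.\<close>
definition S_group :: "(cantor \<Rightarrow> cantor) set" where
  "S_group = gen_group (T_gens \<union> {inv (y_at [True, True, False]) \<circ> y_at [True, False]})"

definition independent :: "bool list \<Rightarrow> bool list \<Rightarrow> bool" where
  "independent s t \<longleftrightarrow> \<not> prefix s t \<and> \<not> prefix t s"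

end

theory Submission
  imports Defs
begin

text \<open>Write \<open>s \<sim> t\<close> (\<open>y_equiv s t\<close>) when \<open>y\<^sub>s y\<^sub>t\<inverse> \<in> S\<close>.  This is an equivalence relation
  on words, and if \<open>g \<in> S\<close> maps the cones \<open>s\<close>, \<open>t\<close> onto the cones \<open>s'\<close>, \<open>t'\<close> by replacing prefixes, then conjugation
  by \<open>g\<close> carries \<open>y\<^sub>s\<close> to \<open>y\<^sub>s\<^sub>'\<close> and \<open>y\<^sub>t\<close> to \<open>y\<^sub>t\<^sub>'\<close>, so \<open>s \<sim> t \<longleftrightarrow> s' \<sim> t'\<close>.  Starting from the
  generator relation \<open>10 \<sim> 110\<close>, such moves by \<open>x\<close>, \<open>x\<^sub>1\<close> give \<open>010 \<sim> 110\<close>; then \<open>x\<close> and \<open>p\<^sub>0\<close>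
  each preserve the class of \<open>10\<close>.  As \<open>x\<close> sends \<open>00v\<close> to \<open>0v\<close> and \<open>01v\<close> to \<open>10v\<close> while \<open>p\<^sub>0\<close>
  flips the first letter, every nonempty word lies in that class.  Hence \<open>y\<^sub>s y\<^sub>t\<inverse> \<in> S\<close> for all
  nonempty \<open>s\<close>, \<open>t\<close>, independent or not.\<close>

declare ymap.simps[simp del]

lemma pre_Nil [simp]: "pre [] \<eta> = \<eta>"
  by (simp add: pre_def)

lemma pre_pre [simp]: "pre u (pre w \<eta>) = pre (u @ w) \<eta>"
  by (auto simp: pre_def nth_append fun_eq_iff)

lemma pre_Cons_0 [simp]: "pre (a # w) \<eta> 0 = a"
  and pre_Cons_Suc [simp]: "pre (a # w) \<eta> (Suc i) = pre w \<eta> i"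
  by (simp_all add: pre_def)

lemma sdrop_pre [simp]: "sdrop (length s) (pre s \<eta>) = \<eta>"
  by (simp add: sdrop_def pre_def fun_eq_iff)

lemma sdrop_1_pre [simp]: "sdrop (Suc 0) (pre (a # w) \<eta>) = pre w \<eta>"
  and sdrop_2_pre [simp]: "sdrop 2 (pre (a # b # w) \<eta>) = pre w \<eta>"
  by (simp_all add: sdrop_def pre_def fun_eq_iff numeral_2_eq_2)

lemma begins_pre_append [simp]: "begins s (pre (s @ z) \<eta>)"
  by (simp add: begins_def pre_def nth_append)

lemma begins_pre [simp]: "begins s (pre s \<eta>)"
  using begins_pre_append[of s "[]"] by simp

lemma pre_sdrop: "begins s \<xi> \<Longrightarrow> pre s (sdrop (length s) \<xi>) = \<xi>"
  by (auto simp: begins_def pre_def sdrop_def fun_eq_iff)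

lemma cantor_cases_0_10_11:
  obtains \<eta> where "\<xi> = pre [False] \<eta>" | \<eta> where "\<xi> = pre [True, False] \<eta>"
  | \<eta> where "\<xi> = pre [True, True] \<eta>"
proof -
  have "\<xi> = pre [\<xi> 0, \<xi> 1] (sdrop 2 \<xi>)" "\<xi> = pre [\<xi> 0] (sdrop 1 \<xi>)"
    by (auto simp: pre_def sdrop_def fun_eq_iff nth_Cons split: nat.split)
  then show thesis using that by (metis (full_types))
qed

lemma cantor_cases_00_01_1:
  obtains \<eta> where "\<xi> = pre [False, False] \<eta>" | \<eta> where "\<xi> = pre [False, True] \<eta>"
  | \<eta> where "\<xi> = pre [True] \<eta>"
proof -
  have "\<xi> = pre [\<xi> 0, \<xi> 1] (sdrop 2 \<xi>)" "\<xi> = pre [\<xi> 0] (sdrop 1 \<xi>)"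
    by (auto simp: pre_def sdrop_def fun_eq_iff nth_Cons split: nat.split)
  then show thesis using that by (metis (full_types))
qed

lemma loc_Nil [simp]: "loc [] g = g"
  by (simp add: loc_def begins_def fun_eq_iff sdrop_def)

lemma loc_pre_append [simp]: "loc u g (pre (u @ w) \<eta>) = pre u (g (pre w \<eta>))"
  using sdrop_pre[of u "pre w \<eta>"] by (simp add: loc_def)

lemma loc_pre_prefix: "prefix u w \<Longrightarrow> loc u g (pre w \<eta>) = pre u (g (pre (drop (length u) w) \<eta>))"
  by (auto simp: prefix_def)

lemma loc_comp: "loc s g \<circ> loc s h = loc s (g \<circ> h)"
proof
  fix \<xi>
  show "(loc s g \<circ> loc s h) \<xi> = loc s (g \<circ> h) \<xi>"
  proof (cases "begins s \<xi>")
    case True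
    then obtain \<eta> where "\<xi> = pre s \<eta>" by (metis pre_sdrop)
    then show ?thesis by (simp add: loc_def)
  qed (simp add: loc_def)
qed

lemma loc_id: "loc s id = id"
  by (auto simp: loc_def fun_eq_iff pre_sdrop)

lemma bij_loc:
  assumes "g \<circ> h = id" "h \<circ> g = id"
  shows "bij (loc s g)"
  by (rule o_bij[of "loc s h"]) (simp_all add: loc_comp loc_id assms)

text \<open>Injectivity of \<open>g\<close> is what keeps \<open>g\<close> from moving points outside the cone \<open>a\<close> into the cone \<open>a'\<close>.\<close>
lemma loc_conjugate:
  assumes "inj g" and g_pre: "\<And>\<eta>. g (pre a \<eta>) = pre a' \<eta>"
  shows "inv g \<circ> loc a' h \<circ> g = loc a h"
proof
  fix \<xi>
  show "(inv g \<circ> loc a' h \<circ> g) \<xi> = loc a h \<xi>"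
  proof (cases "begins a \<xi>")
    case True
    then obtain \<eta> where \<xi>: "\<xi> = pre a \<eta>" by (metis pre_sdrop)
    have "loc a' h (g \<xi>) = g (pre a (h \<eta>))"
      by (simp add: \<xi> g_pre loc_def)
    then show ?thesis using \<open>inj g\<close> by (simp add: \<xi> loc_def)
  next
    case False
    have "\<not> begins a' (g \<xi>)"
    proof
      assume "begins a' (g \<xi>)"
      then have "g \<xi> = g (pre a (sdrop (length a') (g \<xi>)))"
        by (simp add: g_pre pre_sdrop)
      then have "\<xi> = pre a (sdrop (length a') (g \<xi>))"
        using \<open>inj g\<close> by (simp add: inj_eq)
      with False show False by (metis begins_pre)
    qed
    then show ?thesis using False \<open>inj g\<close> by (simp add: loc_def)
  qed
qed

definition ymp_inv :: "cantor \<Rightarrow> cantor" where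
  "ymp_inv \<xi> = (\<lambda>k. ymap True k \<xi>)"

lemma ymp_pre_00 [simp]: "ymp (pre (False # False # v) \<eta>) = pre [False] (ymp (pre v \<eta>))"
  and ymp_pre_01 [simp]: "ymp (pre (False # True # v) \<eta>) = pre [True, False] (ymp_inv (pre v \<eta>))"
  and ymp_pre_1 [simp]: "ymp (pre (True # v) \<eta>) = pre [True, True] (ymp (pre v \<eta>))"
  and ymp_inv_pre_0 [simp]: "ymp_inv (pre (False # v) \<eta>) = pre [False, False] (ymp_inv (pre v \<eta>))"
  and ymp_inv_pre_10 [simp]: "ymp_inv (pre (True # False # v) \<eta>) = pre [False, True] (ymp (pre v \<eta>))"
  and ymp_inv_pre_11 [simp]: "ymp_inv (pre (True # True # v) \<eta>) = pre [True] (ymp_inv (pre v \<eta>))"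
  unfolding ymp_def ymp_inv_def
  by (rule ext, subst ymap.simps, auto split: nat.split)+

lemma ymp_ymp_inv_nth: "ymp (ymp_inv \<xi>) k = \<xi> k \<and> ymp_inv (ymp \<xi>) k = \<xi> k"
proof (induction k arbitrary: \<xi> rule: less_induct)
  case (less k)
  consider "k = 0" | "k = Suc 0" | j where "k = Suc (Suc j)"
    by (metis not0_implies_Suc)
  note k_cases = this
  have "ymp (ymp_inv \<xi>) k = \<xi> k"
    by (rule cantor_cases_0_10_11[of \<xi>]; cases rule: k_cases) (simp_all add: less)
  moreover have "ymp_inv (ymp \<xi>) k = \<xi> k"
    by (rule cantor_cases_00_01_1[of \<xi>]; cases rule: k_cases) (simp_all add: less)
  ultimately show ?case ..
qed

lemma bij_y_at: "bij (y_at s)"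
  using ymp_ymp_inv_nth unfolding y_at_def by (intro bij_loc[of _ ymp_inv]) (auto simp: fun_eq_iff)

definition xmap_inv :: "cantor \<Rightarrow> cantor" where
  "xmap_inv \<xi> = (if \<not> \<xi> 0 then pre [False, False] (sdrop 1 \<xi>)
     else if \<not> \<xi> 1 then pre [False, True] (sdrop 2 \<xi>) else pre [True] (sdrop 2 \<xi>))"

lemma xmap_pre_00 [simp]: "xmap (pre (False # False # v) \<eta>) = pre (False # v) \<eta>"
  and xmap_pre_01 [simp]: "xmap (pre (False # True # v) \<eta>) = pre (True # False # v) \<eta>"
  and xmap_pre_1 [simp]: "xmap (pre (True # v) \<eta>) = pre (True # True # v) \<eta>"
  by (simp_all add: xmap_def)

lemma xmap_inv_pre_0 [simp]: "xmap_inv (pre (False # v) \<eta>) = pre (False # False # v) \<eta>"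
  and xmap_inv_pre_10 [simp]: "xmap_inv (pre (True # False # v) \<eta>) = pre (False # True # v) \<eta>"
  and xmap_inv_pre_11 [simp]: "xmap_inv (pre (True # True # v) \<eta>) = pre (True # v) \<eta>"
  by (simp_all add: xmap_inv_def)

lemma bij_x_at: "bij (x_at s)"
proof -
  have "xmap \<circ> xmap_inv = id"
  proof
    fix \<xi> show "(xmap \<circ> xmap_inv) \<xi> = id \<xi>" by (rule cantor_cases_0_10_11[of \<xi>]) auto
  qed
  moreover have "xmap_inv \<circ> xmap = id"
  proof
    fix \<xi> show "(xmap_inv \<circ> xmap) \<xi> = id \<xi>" by (rule cantor_cases_00_01_1[of \<xi>]) auto
  qed
  ultimately show ?thesis unfolding x_at_def by (rule bij_loc)
qed

lemma p_map_0_pre [simp]: "p_map 0 (pre (b # v) \<eta>) = pre ((\<not> b) # v) \<eta>"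
proof (cases b)
  case False
  then have not_all: "\<not> (\<forall>i\<le>0. pre (b # v) \<eta> i)" by auto
  show ?thesis unfolding p_map_def if_not_P[OF not_all] using False by (simp add: Let_def)
qed (simp add: p_map_def)

lemma bij_p_map_0: "bij (p_map 0)"
proof -
  have involution: "p_map 0 \<circ> p_map 0 = id"
  proof
    fix \<xi>
    have "\<xi> = pre [\<xi> 0] (sdrop 1 \<xi>)"
      by (auto simp: pre_def sdrop_def fun_eq_iff)
    then obtain b \<eta> where "\<xi> = pre [b] \<eta>" by blast
    then show "(p_map 0 \<circ> p_map 0) \<xi> = id \<xi>" by simp
  qed
  show ?thesis by (rule o_bij[OF involution involution])
qed

lemma x_at_in_S: "x_at u \<in> S_group"
  and p_map_in_S: "p_map n \<in> S_group"
  by (auto simp: S_group_def T_gens_def intro: gen_base)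

lemma gen_group_conj_iff:
  assumes g: "g \<in> gen_group A" and "bij g"
  shows "inv g \<circ> f \<circ> g \<in> gen_group A \<longleftrightarrow> f \<in> gen_group A"
proof
  have "g \<circ> inv g = id" "inv g \<circ> g = id"
    using \<open>bij g\<close> by (simp_all add: bij_is_surj bij_is_inj flip: surj_iff)
  then have f_eq: "f = g \<circ> ((inv g \<circ> f \<circ> g) \<circ> inv g)"
    by (metis comp_assoc comp_id id_comp)
  assume "inv g \<circ> f \<circ> g \<in> gen_group A"
  with g show "f \<in> gen_group A"
    by (subst f_eq) (intro gen_comp[OF gen_comp[OF gen_inv[OF g]]])
next
  assume "f \<in> gen_group A"
  with g show "inv g \<circ> f \<circ> g \<in> gen_group A"
    by (intro gen_comp[OF g] gen_comp[OF _ gen_inv[OF g]])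
qed

definition y_equiv :: "bool list \<Rightarrow> bool list \<Rightarrow> bool" where
  "y_equiv s t \<longleftrightarrow> inv (y_at t) \<circ> y_at s \<in> S_group"

lemma y_equiv_refl: "y_equiv s s"
  using bij_y_at[of s] by (simp add: y_equiv_def bij_is_inj S_group_def gen_id)

lemma y_equiv_sym: "y_equiv s t \<Longrightarrow> y_equiv t s"
proof -
  assume "y_equiv s t"
  then have "inv (inv (y_at t) \<circ> y_at s) \<in> S_group"
    by (simp add: y_equiv_def S_group_def gen_inv)
  then show "y_equiv t s"
    by (simp add: y_equiv_def o_inv_distrib bij_y_at bij_imp_bij_inv inv_inv_eq)
qed

lemma y_equiv_trans: "y_equiv s u \<Longrightarrow> y_equiv u t \<Longrightarrow> y_equiv s t"
proof -
  assume "y_equiv s u" "y_equiv u t"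
  then have "(inv (y_at t) \<circ> y_at u) \<circ> (inv (y_at u) \<circ> y_at s) \<in> S_group"
    by (simp add: y_equiv_def S_group_def gen_comp)
  moreover have "y_at u \<circ> inv (y_at u) = id"
    using bij_y_at[of u] by (simp add: bij_is_surj flip: surj_iff)
  ultimately show "y_equiv s t"
    by (simp add: y_equiv_def comp_assoc) (simp add: comp_assoc[symmetric])
qed

lemma y_equiv_transport:
  assumes "g \<in> S_group" "bij g"
    and "\<And>\<eta>. g (pre s \<eta>) = pre s' \<eta>" "\<And>\<eta>. g (pre t \<eta>) = pre t' \<eta>"
  shows "y_equiv s t \<longleftrightarrow> y_equiv s' t'"
proof -
  have "y_at s = inv g \<circ> y_at s' \<circ> g" "y_at t = inv g \<circ> y_at t' \<circ> g"
    using loc_conjugate[OF bij_is_inj[OF assms(2)] assms(3)]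
      loc_conjugate[OF bij_is_inj[OF assms(2)] assms(4)]
    by (simp_all add: y_at_def)
  moreover have "inv (inv g \<circ> y_at t' \<circ> g) = inv g \<circ> inv (y_at t') \<circ> g"
    using assms(2) bij_y_at[of t']
    by (simp add: o_inv_distrib bij_comp bij_imp_bij_inv inv_inv_eq comp_assoc)
  moreover have "g \<circ> inv g = id"
    using assms(2) by (simp add: bij_is_surj flip: surj_iff)
  ultimately have "inv (y_at t) \<circ> y_at s = inv g \<circ> (inv (y_at t') \<circ> y_at s') \<circ> g"
    by (simp add: comp_assoc) (metis comp_assoc id_comp)
  then show ?thesis
    using gen_group_conj_iff[OF assms(1)[unfolded S_group_def] assms(2)]
    by (simp add: y_equiv_def S_group_def)
qed

lemma y_equiv_10_110: "y_equiv [True, False] [True, True, False]"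
  unfolding y_equiv_def S_group_def by (auto intro: gen_base)

lemma y_equiv_010_110: "y_equiv [False, True, False] [True, True, False]"
proof -
  note x_transport = y_equiv_transport[OF x_at_in_S bij_x_at]
  have "y_equiv [True, True, False] [True, True, True, False]"
    using y_equiv_10_110 x_transport[of "[]" "[True, False]" _ "[True, True, False]"]
    by (simp add: x_at_def)
  then have "y_equiv [True, False] [True, True, True, False]"
    using y_equiv_10_110 y_equiv_trans by blast
  then have "y_equiv [True, False, False] [True, True, False]"
    using x_transport[of "[True]" "[True, False, False]" "[True, False]" "[True, True, False]"]
    by (simp add: x_at_def loc_pre_prefix)
  then have "y_equiv [False, True, False] [True, False]"
    using x_transport[of "[]" "[False, True, False]" "[True, False, False]" "[True, False]"]
    by (simp add: x_at_def)
  then show ?thesis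
    using y_equiv_10_110 y_equiv_trans by blast
qed

lemma y_equiv_10_xmap_iff:
  assumes "\<And>\<eta>. xmap (pre w \<eta>) = pre w' \<eta>"
  shows "y_equiv w [True, False] \<longleftrightarrow> y_equiv w' [True, False]"
proof -
  have "y_equiv w [True, False] \<longleftrightarrow> y_equiv w' [True, True, False]"
    by (rule y_equiv_transport[OF x_at_in_S[of "[]"] bij_x_at]) (simp_all add: x_at_def assms)
  then show ?thesis
    using y_equiv_10_110 y_equiv_sym y_equiv_trans by blast
qed

lemma y_equiv_10_flip_iff:
  "y_equiv (b # v) [True, False] \<longleftrightarrow> y_equiv ((\<not> b) # v) [True, False]"
proof -
  have "y_equiv (b # v) [True, True, False] \<longleftrightarrow> y_equiv ((\<not> b) # v) [False, True, False]"
    by (rule y_equiv_transport[OF p_map_in_S bij_p_map_0]) simp_all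
  then show ?thesis
    using y_equiv_10_110 y_equiv_010_110 y_equiv_sym y_equiv_trans by blast
qed

lemma y_equiv_10_Cons_False: "y_equiv (False # v) [True, False]"
proof (induction v)
  case Nil
  have "y_equiv [False, True] [True, False]"
    using y_equiv_10_xmap_iff[of "[False, True]" "[True, False]"] y_equiv_refl by simp
  then have "y_equiv [True, True] [True, False]"
    using y_equiv_10_flip_iff[of False "[True]"] by simp
  then have "y_equiv [True] [True, False]"
    using y_equiv_10_xmap_iff[of "[True]" "[True, True]"] by simp
  then show ?case
    using y_equiv_10_flip_iff[of True "[]"] by simp
next
  case (Cons a v)
  have "y_equiv (False # False # v) [True, False]"
    using Cons.IH y_equiv_10_xmap_iff[of "False # False # v" "False # v"] by simp
  moreover have "y_equiv (False # True # v) [True, False]"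
    using \<open>y_equiv (False # False # v) [True, False]\<close>
      y_equiv_10_flip_iff[of False "False # v"] y_equiv_10_xmap_iff[of "False # True # v" "True # False # v"]
    by simp
  ultimately show ?case by (cases a) simp_all
qed

lemma y_equiv_nonempty:
  assumes "s \<noteq> []" "t \<noteq> []"
  shows "y_equiv s t"
proof -
  have "y_equiv w [True, False]" if "w \<noteq> []" for w
  proof -
    obtain b v where "w = b # v" using \<open>w \<noteq> []\<close> by (cases w) auto
    then show ?thesis
      using y_equiv_10_Cons_False[of v] y_equiv_10_flip_iff[of True v] by (cases b) simp_all
  qed
  then show ?thesis
    using assms y_equiv_sym y_equiv_trans by blast
qed

theorem lemma6p7:
  fixes s t :: "bool list"
  assumes "independent s t"
  shows "inv (y_at t) \<circ> y_at s \<in> S_group"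
proof -
  have "s \<noteq> []" "t \<noteq> []"
    using assms by (auto simp: independent_def)
  then show ?thesis
    using y_equiv_nonempty unfolding y_equiv_def by blast
qed

end
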